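(* Let $\mathcal{D}[t]\subset\mathcal{H}\subset\mathcal{D}^\times[t^\times]$ be a rigged Hilbert space with $\mathcal{D}[t]$ complete and reflexive, and suppose it has a strict Riesz-like basis $\{\xi_n\}$, with dual sequence $\{\zeta_n\}\subset\mathcal{D}^\times$. Then the rigged Hilbert space is (equivalent to) a triplet of Hilbert spaces $\mathcal{H}_{+1}\subset\mathcal{H}\subset\mathcal{H}_{-1}$, where $\mathcal{H}_{+1}$ is $\mathcal{D}$ with a Hilbert norm defining a topology equivalent to $t$ and $\mathcal{H}_{-1}$ is its conjugate dual (i.e. $\mathcal{D}^\times$ with the dual Hilbert norm). Moreover, $\{\xi_n\}$ is an orthonormal basis for $\mathcal{H}_{+1}$ and $\{\zeta_n\}$ is an orthonormal basis for $\mathcal{H}_{-1}$.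
   Context: A rigged Hilbert space $\mathcal{D}[t]\subset\mathcal{H}\subset\mathcal{D}^\times[t^\times]$: $\mathcal{D}$ is a dense subspace of the Hilbert space $\mathcal{H}$ with a locally convex topology $t$ finer than the norm topology, $\mathcal{D}^\times$ is the space of continuous conjugate-linear functionals on $\mathcal{D}[t]$ with the strong dual topology $t^\times=\beta(\mathcal{D}^\times,\mathcal{D})$, and $\mathcal{H}\subset\mathcal{D}^\times$ with the duality form $\langle\Phi,f\rangle$ extending the inner product. A Schauder basis of $\mathcal{D}[t]$ is a sequence $\{\xi_n\}$ such that every $f\in\mathcal{D}$ has a unique expansion $f=\sum c_n\xi_n$ converging in $\mathcal{D}[t]$ with $t$-continuous coefficient functionals; writing $c_n(f)=\overline{\langle\zeta_n,f\rangle}$ with $\zeta_n\in\mathcal{D}^\times$ defines the dual sequence $\{\zeta_n\}$ (biorthogonal: $\langle\zeta_n,\xi_k\rangle=\delta_{n,k}$). $\mathcal{C}(\mathcal{D},\mathcal{H})$ denotes linear maps $\mathcal{D}\to\mathcal{H}$ continuous from $\mathcal{D}[t]$ into $\mathcal{H}$; $\mathcal{C}(\mathcal{H},\mathcal{D})$ denotes continuous linear maps from $\mathcal{H}$ into $\mathcal{D}[t]$. A Schauder basis $\{\xi_n\}$ is a Riesz-like basis if there is a one-to-one $T\in\mathcal{C}(\mathcal{D},\mathcal{H})$ with $\{T\xi_n\}$ an orthonormal basis of $\mathcal{H}$; it is a strict Riesz-like basis if moreover $T$ has a continuous inverse $T^{-1}\in\mathcal{C}(\mathcal{H},\mathcal{D})$.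 *)

theory Defs
  imports "HOL-Analysis.Analysis" "HOL-Library.Function_Algebras"
begin

class complex_vector = ab_group_add +
  fixes scaleC :: "complex \<Rightarrow> 'a \<Rightarrow> 'a" (infixr \<open>*\<^sub>C\<close> 75)
  assumes scaleC_add_right: "a *\<^sub>C (x + y) = a *\<^sub>C x + a *\<^sub>C y"
    and scaleC_add_left: "(a + b) *\<^sub>C x = a *\<^sub>C x + b *\<^sub>C x"
    and scaleC_scaleC: "a *\<^sub>C (b *\<^sub>C x) = (a * b) *\<^sub>C x"
    and scaleC_one: "1 *\<^sub>C x = x"

instantiation complex :: complex_vector
begin
definition scaleC_complex_def: "a *\<^sub>C (z::complex) = a * z"
instance by standard (auto simp: scaleC_complex_def algebra_simps)
end

instantiation "fun" :: (type, complex_vector) complex_vector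
begin
definition scaleC_fun_def: "a *\<^sub>C f = (\<lambda>x. a *\<^sub>C f x)"
instance by standard (auto simp: scaleC_fun_def scaleC_add_right scaleC_add_left scaleC_scaleC scaleC_one)
end

text \<open>A complex inner product space (pre-Hilbert space); the inner product is linear
  in the first and conjugate-linear in the second argument, and the norm is the inner
  product norm.  A complex Hilbert space is a type of class
  \<open>{complex_inner, complete_space}\<close>.\<close>
class complex_inner = complex_vector + real_normed_vector +
  fixes cinner :: "'a \<Rightarrow> 'a \<Rightarrow> complex"
  assumes scaleR_scaleC: "scaleR r x = complex_of_real r *\<^sub>C x"
    and cinner_commute: "cinner x y = cnj (cinner y x)"
    and cinner_add_left: "cinner (x + y) z = cinner x z + cinner y z"
    and cinner_scaleC_left: "cinner (a *\<^sub>C x) y = a * cinner x y"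
    and cinner_ge_zero: "0 \<le> Re (cinner x x)"
    and cinner_eq_zero_iff: "cinner x x = 0 \<longleftrightarrow> x = 0"
    and norm_eq_sqrt_cinner: "norm x = sqrt (Re (cinner x x))"

definition csubspace :: "'a::complex_vector set \<Rightarrow> bool" where
  "csubspace V \<longleftrightarrow> 0 \<in> V \<and> (\<forall>x\<in>V. \<forall>y\<in>V. x + y \<in> V) \<and> (\<forall>a. \<forall>x\<in>V. a *\<^sub>C x \<in> V)"

definition clinear_on :: "'a::complex_vector set \<Rightarrow> ('a \<Rightarrow> 'b::complex_vector) \<Rightarrow> bool" where
  "clinear_on V f \<longleftrightarrow> (\<forall>x\<in>V. \<forall>y\<in>V. f (x + y) = f x + f y) \<and> (\<forall>a. \<forall>x\<in>V. f (a *\<^sub>C x) = a *\<^sub>C f x)"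

definition conjlinear_on :: "'a::complex_vector set \<Rightarrow> ('a \<Rightarrow> complex) \<Rightarrow> bool" where
  "conjlinear_on V f \<longleftrightarrow> (\<forall>x\<in>V. \<forall>y\<in>V. f (x + y) = f x + f y) \<and> (\<forall>a. \<forall>x\<in>V. f (a *\<^sub>C x) = cnj a * f x)"

definition seminorm_on :: "'a::complex_vector set \<Rightarrow> ('a \<Rightarrow> real) \<Rightarrow> bool" where
  "seminorm_on V p \<longleftrightarrow> (\<forall>x\<in>V. 0 \<le> p x) \<and> (\<forall>x\<in>V. \<forall>y\<in>V. p (x + y) \<le> p x + p y)
     \<and> (\<forall>a. \<forall>x\<in>V. p (a *\<^sub>C x) = cmod a * p x)"

definition sn_open :: "'a::complex_vector set \<Rightarrow> ('a \<Rightarrow> real) set \<Rightarrow> 'a set \<Rightarrow> bool" where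
  "sn_open V P U \<longleftrightarrow> U \<subseteq> V \<and> (\<forall>x\<in>U. \<exists>F e. finite F \<and> F \<subseteq> P \<and> 0 < e \<and>
      {y\<in>V. \<forall>p\<in>F. p (y - x) < e} \<subseteq> U)"

lemma sn_open_Int:
  assumes S: "sn_open V P S" and T: "sn_open V P T" shows "sn_open V P (S \<inter> T)"
proof -
  have "\<exists>F e. finite F \<and> F \<subseteq> P \<and> 0 < e \<and> {y\<in>V. \<forall>p\<in>F. p (y - x) < e} \<subseteq> S \<inter> T"
    if x: "x \<in> S \<inter> T" for x
  proof -
    from S x have "\<exists>F e. finite F \<and> F \<subseteq> P \<and> 0 < e \<and> {y\<in>V. \<forall>p\<in>F. p (y - x) < e} \<subseteq> S"
      unfolding sn_open_def by (meson IntD1)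
    then obtain F1 e1 where 1: "finite F1" "F1 \<subseteq> P" "0 < e1" "{y\<in>V. \<forall>p\<in>F1. p (y - x) < e1} \<subseteq> S"
      by blast
    from T x have "\<exists>F e. finite F \<and> F \<subseteq> P \<and> 0 < e \<and> {y\<in>V. \<forall>p\<in>F. p (y - x) < e} \<subseteq> T"
      unfolding sn_open_def by (meson IntD2)
    then obtain F2 e2 where 2: "finite F2" "F2 \<subseteq> P" "0 < e2" "{y\<in>V. \<forall>p\<in>F2. p (y - x) < e2} \<subseteq> T"
      by blast
    have "{y\<in>V. \<forall>p\<in>F1 \<union> F2. p (y - x) < min e1 e2} \<subseteq> S \<inter> T"
    proof
      fix y assume y: "y \<in> {y\<in>V. \<forall>p\<in>F1 \<union> F2. p (y - x) < min e1 e2}"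
      then have "y \<in> {y\<in>V. \<forall>p\<in>F1. p (y - x) < e1}" "y \<in> {y\<in>V. \<forall>p\<in>F2. p (y - x) < e2}" by auto
      then show "y \<in> S \<inter> T" using 1(4) 2(4) by blast
    qed
    then show ?thesis using 1 2 by (intro exI[of _ "F1 \<union> F2"] exI[of _ "min e1 e2"]) auto
  qed
  moreover have "S \<inter> T \<subseteq> V" using S unfolding sn_open_def by blast
  ultimately show ?thesis unfolding sn_open_def by blast
qed

lemma sn_open_Union:
  assumes K: "\<forall>U\<in>K. sn_open V P U" shows "sn_open V P (\<Union>K)"
proof -
  have "\<exists>F e. finite F \<and> F \<subseteq> P \<and> 0 < e \<and> {y\<in>V. \<forall>p\<in>F. p (y - x) < e} \<subseteq> \<Union>K"
    if "x \<in> \<Union>K" for x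
  proof -
    from that obtain U where U: "U \<in> K" "x \<in> U" by blast
    with K have "\<exists>F e. finite F \<and> F \<subseteq> P \<and> 0 < e \<and> {y\<in>V. \<forall>p\<in>F. p (y - x) < e} \<subseteq> U"
      unfolding sn_open_def by blast
    with U(1) show ?thesis by blast
  qed
  moreover have "\<Union>K \<subseteq> V" using K unfolding sn_open_def by blast
  ultimately show ?thesis unfolding sn_open_def by blast
qed

lemma istopology_sn_open: "istopology (sn_open V P)"
  unfolding istopology_def using sn_open_Int sn_open_Union by blast

definition seminorm_topology :: "'a::complex_vector set \<Rightarrow> ('a \<Rightarrow> real) set \<Rightarrow> 'a topology" where
  "seminorm_topology V P = topology (sn_open V P)"

definition lc_topology :: "'a::complex_vector set \<Rightarrow> 'a topology \<Rightarrow> bool" where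
  "lc_topology V t \<longleftrightarrow> csubspace V \<and>
     (\<exists>P. (\<forall>p\<in>P. seminorm_on V p) \<and> t = seminorm_topology V P)"

definition tvs_bounded :: "'a::complex_vector topology \<Rightarrow> 'a set \<Rightarrow> bool" where
  "tvs_bounded t B \<longleftrightarrow> B \<subseteq> topspace t \<and>
     (\<forall>U. openin t U \<and> 0 \<in> U \<longrightarrow> (\<exists>s>0. \<forall>a. s \<le> cmod a \<longrightarrow> B \<subseteq> (\<lambda>x. a *\<^sub>C x) ` U))"

text \<open>\<open>V\<^sup>\<times>\<close>: continuous conjugate-linear functionals on \<open>V[t]\<close>; they are represented as
  functions vanishing outside \<open>V\<close>.  The duality form is \<open>\<langle>\<Phi>, f\<rangle> = \<Phi> f\<close>.\<close>
definition cdual :: "'a::complex_vector set \<Rightarrow> 'a topology \<Rightarrow> ('a \<Rightarrow> complex) set" where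
  "cdual V t = {\<Phi>. conjlinear_on V \<Phi> \<and> continuous_map t euclidean \<Phi> \<and> (\<forall>x. x \<notin> V \<longrightarrow> \<Phi> x = 0)}"

definition strong_dual :: "'a::complex_vector set \<Rightarrow> 'a topology \<Rightarrow> ('a \<Rightarrow> complex) topology" where
  "strong_dual V t = seminorm_topology (cdual V t)
     {(\<lambda>\<Phi>. Sup (insert 0 ((\<lambda>f. cmod (\<Phi> f)) ` B))) | B. B \<subseteq> V \<and> tvs_bounded t B}"

definition canonical_bidual :: "'a::complex_vector set \<Rightarrow> 'a topology \<Rightarrow> 'a \<Rightarrow> (('a \<Rightarrow> complex) \<Rightarrow> complex)" where
  "canonical_bidual V t f = (\<lambda>\<Phi>. if \<Phi> \<in> cdual V t then cnj (\<Phi> f) else 0)"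

definition reflexive_lcs :: "'a::complex_vector set \<Rightarrow> 'a topology \<Rightarrow> bool" where
  "reflexive_lcs V t \<longleftrightarrow>
     homeomorphic_map t (strong_dual (cdual V t) (strong_dual V t)) (canonical_bidual V t)"

definition tvs_cauchy_filter :: "'a::complex_vector topology \<Rightarrow> 'a filter \<Rightarrow> bool" where
  "tvs_cauchy_filter t F \<longleftrightarrow> F \<noteq> bot \<and> eventually (\<lambda>x. x \<in> topspace t) F \<and>
     (\<forall>U. openin t U \<and> 0 \<in> U \<longrightarrow> (\<exists>A. eventually (\<lambda>x. x \<in> A) F \<and> (\<forall>x\<in>A. \<forall>y\<in>A. x - y \<in> U)))"

definition complete_tvs :: "'a::complex_vector topology \<Rightarrow> bool" where
  "complete_tvs t \<longleftrightarrow> (\<forall>F. tvs_cauchy_filter t F \<longrightarrow> (\<exists>a. limitin t (\<lambda>x. x) a F))"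

definition schauder_coeffs :: "'a::complex_vector topology \<Rightarrow> (nat \<Rightarrow> 'a) \<Rightarrow> 'a \<Rightarrow> nat \<Rightarrow> complex" where
  "schauder_coeffs t \<xi> f = (THE c. limitin t (\<lambda>N. \<Sum>n<N. c n *\<^sub>C \<xi> n) f sequentially)"

definition schauder_basis :: "'a::complex_vector set \<Rightarrow> 'a topology \<Rightarrow> (nat \<Rightarrow> 'a) \<Rightarrow> bool" where
  "schauder_basis V t \<xi> \<longleftrightarrow> range \<xi> \<subseteq> V \<and>
     (\<forall>f\<in>V. \<exists>!c. limitin t (\<lambda>N. \<Sum>n<N. c n *\<^sub>C \<xi> n) f sequentially) \<and>
     (\<forall>n. continuous_map t euclidean (\<lambda>f. schauder_coeffs t \<xi> f n))"

definition ip_norm :: "('a \<Rightarrow> 'a \<Rightarrow> complex) \<Rightarrow> 'a \<Rightarrow> real" where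
  "ip_norm ip x = sqrt (Re (ip x x))"

definition onb_on :: "'a::complex_vector set \<Rightarrow> ('a \<Rightarrow> 'a \<Rightarrow> complex) \<Rightarrow> (nat \<Rightarrow> 'a) \<Rightarrow> bool" where
  "onb_on V ip e \<longleftrightarrow> range e \<subseteq> V \<and> (\<forall>n m. ip (e n) (e m) = (if n = m then 1 else 0)) \<and>
     (\<forall>x\<in>V. \<forall>\<epsilon>>0. \<exists>N c. ip_norm ip (x - (\<Sum>n<N. c n *\<^sub>C e n)) < \<epsilon>)"

definition hilbert_ip_on :: "'a::complex_vector set \<Rightarrow> ('a \<Rightarrow> 'a \<Rightarrow> complex) \<Rightarrow> bool" where
  "hilbert_ip_on V ip \<longleftrightarrow> csubspace V \<and>
     (\<forall>x\<in>V. \<forall>y\<in>V. ip x y = cnj (ip y x)) \<and>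
     (\<forall>x\<in>V. \<forall>y\<in>V. \<forall>z\<in>V. ip (x + y) z = ip x z + ip y z) \<and>
     (\<forall>a. \<forall>x\<in>V. \<forall>y\<in>V. ip (a *\<^sub>C x) y = a * ip x y) \<and>
     (\<forall>x\<in>V. 0 \<le> Re (ip x x) \<and> (ip x x = 0 \<longleftrightarrow> x = 0)) \<and>
     (\<forall>s. (\<forall>n. s n \<in> V) \<and> (\<forall>\<epsilon>>0. \<exists>N. \<forall>m\<ge>N. \<forall>n\<ge>N. ip_norm ip (s m - s n) < \<epsilon>)
          \<longrightarrow> (\<exists>x\<in>V. (\<lambda>n. ip_norm ip (s n - x)) \<longlonglongrightarrow> 0))"

text \<open>\<open>D[t] \<subseteq> H \<subseteq> D\<^sup>\<times>[t\<^sup>\<times>]\<close>, with \<open>H\<close> the ambient Hilbert space (the type \<open>'h\<close>):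
  \<open>D\<close> dense subspace, \<open>t\<close> locally convex on \<open>D\<close> and finer than the norm topology.
  \<open>H\<close> is embedded in \<open>D\<^sup>\<times>\<close> by \<open>h_embed\<close>, so the duality form extends the inner product.\<close>
definition h_embed :: "'h::complex_inner set \<Rightarrow> 'h \<Rightarrow> ('h \<Rightarrow> complex)" where
  "h_embed D h = (\<lambda>g. if g \<in> D then cinner h g else 0)"

definition rigged_hilbert_space :: "'h::{complex_inner,complete_space} set \<Rightarrow> 'h topology \<Rightarrow> bool" where
  "rigged_hilbert_space D t \<longleftrightarrow> csubspace D \<and> closure D = UNIV \<and> lc_topology D t \<and>
     (\<forall>U. openin (top_of_set D) U \<longrightarrow> openin t U) \<and>
     (\<forall>h. h_embed D h \<in> cdual D t) \<and> inj (h_embed D)"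

definition strict_riesz_like_basis :: "'h::{complex_inner,complete_space} set \<Rightarrow> 'h topology \<Rightarrow> (nat \<Rightarrow> 'h) \<Rightarrow> bool" where
  "strict_riesz_like_basis D t \<xi> \<longleftrightarrow> schauder_basis D t \<xi> \<and>
     (\<exists>T :: 'h \<Rightarrow> 'h. clinear_on D T \<and> inj_on T D \<and> continuous_map t euclidean T \<and>
        onb_on UNIV cinner (T \<circ> \<xi>) \<and>
        T ` D = UNIV \<and> continuous_map euclidean t (inv_into D T))"

end

theory Submission
  imports Defs
begin

text \<open>The strict Riesz-like basis provides a linear homeomorphism \<open>T\<close> of \<open>D[t]\<close> onto \<open>H\<close>.
  Transporting the inner product of \<open>H\<close> along \<open>T\<close> gives a Hilbert norm \<open>f \<mapsto> \<parallel>T f\<parallel>\<close> on \<open>D\<close>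
  which induces \<open>t\<close>, and \<open>{\<xi>\<^sub>n}\<close> is orthonormal for it because \<open>{T \<xi>\<^sub>n}\<close> is orthonormal in \<open>H\<close>.
  Every \<open>\<Phi> \<in> D\<^sup>\<times>\<close> is of the form \<open>\<Phi> f = \<langle>r, T f\<rangle>\<close> for a unique \<open>r \<in> H\<close>, found by expanding
  \<open>\<Phi>\<close> along the orthonormal basis \<open>{T \<xi>\<^sub>n}\<close>, and \<open>\<parallel>r\<parallel>\<close> is the dual norm of \<open>\<Phi>\<close>.  The \<open>T\<close>-unit
  ball is \<open>t\<close>-bounded and every \<open>t\<close>-bounded set is \<open>T\<close>-bounded, so this norm induces the strong
  dual topology.  Finally \<open>\<zeta>\<^sub>n\<close> is represented by \<open>T \<xi>\<^sub>n\<close>, hence \<open>{\<zeta>\<^sub>n}\<close> is orthonormal as well.\<close>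

section \<open>Complex inner product spaces\<close>

lemma scaleC_zero_left [simp]: "(0::complex) *\<^sub>C (x::'a::complex_vector) = 0"
proof -
  have "0 *\<^sub>C x + 0 *\<^sub>C x = 0 *\<^sub>C x"
    using scaleC_add_left[of 0 0 x] by simp
  then show ?thesis by (rule add_cancel_left_right[THEN iffD1])
qed

lemma scaleC_zero_right [simp]: "a *\<^sub>C (0::'a::complex_vector) = 0"
proof -
  have "a *\<^sub>C 0 + a *\<^sub>C 0 = a *\<^sub>C (0::'a)"
    using scaleC_add_right[of a "0::'a" 0] by simp
  then show ?thesis by (rule add_cancel_left_right[THEN iffD1])
qed

lemma scaleC_minus_left: "(- a) *\<^sub>C (x::'a::complex_vector) = - (a *\<^sub>C x)"
proof -
  have "(-a) *\<^sub>C x + a *\<^sub>C x = (-a + a) *\<^sub>C x" by (rule scaleC_add_left[symmetric])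
  then have "(-a) *\<^sub>C x + a *\<^sub>C x = 0" by simp
  then show ?thesis by (rule eq_neg_iff_add_eq_0[THEN iffD2])
qed

lemma scaleC_minus_one: "(-1) *\<^sub>C (x::'a::complex_vector) = - x"
  by (simp add: scaleC_minus_left scaleC_one)

lemma cinner_add_right: "cinner x (y + z) = cinner x y + cinner (x::'a::complex_inner) z"
  by (simp add: cinner_commute[of x "y+z"] cinner_commute[of x y] cinner_commute[of x z] cinner_add_left)

lemma cinner_scaleC_right: "cinner x (a *\<^sub>C y) = cnj a * cinner (x::'a::complex_inner) y"
  by (simp add: cinner_commute[of x "a *\<^sub>C y"] cinner_commute[of x y] cinner_scaleC_left)

lemma cinner_zero_left [simp]: "cinner 0 (x::'a::complex_inner) = 0"
  using cinner_scaleC_left[of 0 0 x] by simp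

lemma cinner_zero_right [simp]: "cinner x (0::'a::complex_inner) = 0"
  by (simp add: cinner_commute[of x 0])

lemma cinner_minus_left: "cinner (- x) (y::'a::complex_inner) = - cinner x y"
  using cinner_scaleC_left[of "-1" x y] by (simp add: scaleC_minus_one)

lemma cinner_minus_right: "cinner x (- y::'a::complex_inner) = - cinner x y"
  by (simp add: cinner_commute[of x "-y"] cinner_commute[of x y] cinner_minus_left)

lemma cinner_diff_left: "cinner (x - y) (z::'a::complex_inner) = cinner x z - cinner y z"
  by (simp only: diff_conv_add_uminus cinner_add_left cinner_minus_left)

lemma cinner_diff_right: "cinner x (y - z::'a::complex_inner) = cinner x y - cinner x z"
  by (simp only: diff_conv_add_uminus cinner_add_right cinner_minus_right)

lemma cinner_sum_left: "cinner (\<Sum>i\<in>A. f i) (y::'a::complex_inner) = (\<Sum>i\<in>A. cinner (f i) y)"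
  by (induction A rule: infinite_finite_induct) (auto simp: cinner_add_left)

lemma cinner_sum_right: "cinner y (\<Sum>i\<in>A. f i) = (\<Sum>i\<in>A. cinner (y::'a::complex_inner) (f i))"
  by (induction A rule: infinite_finite_induct) (auto simp: cinner_add_right)

lemma cinner_self: "cinner x (x::'a::complex_inner) = complex_of_real ((norm x)\<^sup>2)"
proof -
  have "Im (cinner x x) = 0"
    using arg_cong[OF cinner_commute[of x x], of Im] by simp
  moreover have "(norm x)\<^sup>2 = Re (cinner x x)"
    by (simp add: norm_eq_sqrt_cinner cinner_ge_zero)
  ultimately show ?thesis by (simp add: complex_eq_iff)
qed

lemma norm_scaleC: "norm (a *\<^sub>C x) = cmod a * norm (x::'a::complex_inner)"
proof -
  have "(norm (a *\<^sub>C x))\<^sup>2 = Re (cinner (a *\<^sub>C x) (a *\<^sub>C x))" by (simp add: norm_eq_sqrt_cinner cinner_ge_zero)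
  also have "\<dots> = Re (a * (cnj a * cinner x x))" by (simp only: cinner_scaleC_left cinner_scaleC_right mult.left_commute[of "cnj a" a])
  also have "a * (cnj a * cinner x x) = (a * cnj a) * cinner x x" by (rule mult.assoc[symmetric])
  also have "\<dots> = complex_of_real ((cmod a)\<^sup>2 * (norm x)\<^sup>2)" by (simp only: complex_norm_square[symmetric] cinner_self of_real_mult)
  also have "Re \<dots> = (cmod a)\<^sup>2 * (norm x)\<^sup>2" by (rule Re_complex_of_real)
  finally have "(norm (a *\<^sub>C x))\<^sup>2 = (cmod a * norm x)\<^sup>2" by (simp add: power_mult_distrib)
  then show ?thesis by (simp add: power2_eq_iff_nonneg)
qed

lemma norm_cinner_le: "cmod (cinner x y) \<le> norm x * norm (y::'a::complex_inner)"
proof (cases "y = 0")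
  case True then show ?thesis by simp
next
  case False
  define c where "c = cinner x y"
  define n where "n = (norm y)\<^sup>2"
  have n: "n > 0" using False by (simp add: n_def)
  define a where "a = c / complex_of_real n"
  have yy: "cinner y y = complex_of_real n" by (simp add: n_def cinner_self)
  have yx: "cinner y x = cnj c" by (simp add: c_def cinner_commute[of y x])
  \<comment> \<open>expand \<open>0 \<le> \<parallel>x - a y\<parallel>\<^sup>2\<close> for the projection coefficient \<open>a = \<langle>x, y\<rangle> / \<parallel>y\<parallel>\<^sup>2\<close>\<close>
  have "cinner (x - a *\<^sub>C y) (x - a *\<^sub>C y) = cinner x x - cnj a * c - a * cnj c + a * cnj a * complex_of_real n"
    by (simp add: cinner_diff_left cinner_diff_right cinner_scaleC_left cinner_scaleC_right yy yx
        c_def[symmetric] algebra_simps)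
  also have "\<dots> = cinner x x - c * cnj c / complex_of_real n"
    using n by (simp add: a_def field_simps)
  finally have "0 \<le> Re (cinner x x - c * cnj c / complex_of_real n)"
    by (metis cinner_ge_zero)
  then have "(cmod c)\<^sup>2 / n \<le> (norm x)\<^sup>2"
    by (simp add: cinner_self complex_mult_cnj Re_divide_of_real cmod_power2)
  then have "(cmod c)\<^sup>2 \<le> (norm x * norm y)\<^sup>2"
    using n by (simp add: n_def field_simps power_mult_distrib)
  then show ?thesis unfolding c_def
    by (rule power2_le_imp_le) simp
qed

lemma ip_norm_cinner: "ip_norm cinner x = norm (x::'a::complex_inner)"
  by (simp add: ip_norm_def norm_eq_sqrt_cinner)

lemma bounded_linear_cinner_left: "bounded_linear (\<lambda>x. cinner x (y::'a::complex_inner))"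
proof (rule bounded_linear_intro[where K="norm y"])
  fix x z :: 'a show "cinner (x + z) y = cinner x y + cinner z y" by (rule cinner_add_left)
next
  fix r x show "cinner (r *\<^sub>R x) y = r *\<^sub>R cinner x y"
    by (simp add: scaleR_scaleC cinner_scaleC_left scaleR_conv_of_real)
next
  fix x show "norm (cinner x y) \<le> norm x * norm y" by (rule norm_cinner_le)
qed

lemma bounded_linear_cinner_right: "bounded_linear (\<lambda>y. cinner (x::'a::complex_inner) y)"
proof (rule bounded_linear_intro[where K="norm x"])
  fix y z :: 'a show "cinner x (y + z) = cinner x y + cinner x z" by (rule cinner_add_right)
next
  fix r y show "cinner x (r *\<^sub>R y) = r *\<^sub>R cinner x y"
    by (simp add: scaleR_scaleC cinner_scaleC_right scaleR_conv_of_real)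
next
  fix y show "norm (cinner x y) \<le> norm y * norm x" using norm_cinner_le[of x y] by (simp add: mult.commute)
qed

lemmas tendsto_cinner_left = bounded_linear.tendsto[OF bounded_linear_cinner_left]
lemmas tendsto_cinner_right = bounded_linear.tendsto[OF bounded_linear_cinner_right]

section \<open>Topologies generated by seminorms\<close>

lemma topspace_seminorm_topology: "topspace (seminorm_topology V P) = V"
proof -
  have "sn_open V P V"
    unfolding sn_open_def by (auto intro!: exI[of _ "{}"] exI[of _ "1::real"])
  moreover have "\<And>U. sn_open V P U \<Longrightarrow> U \<subseteq> V" unfolding sn_open_def by blast
  ultimately show ?thesis unfolding topspace_def seminorm_topology_def
    by (auto simp: istopology_sn_open)
qed

lemma openin_seminorm_topology: "openin (seminorm_topology V P) U = sn_open V P U"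
  by (simp add: seminorm_topology_def istopology_sn_open)

lemma sn_open_dominated:
  assumes dom: "\<And>F e. finite F \<Longrightarrow> F \<subseteq> P \<Longrightarrow> e > 0 \<Longrightarrow> \<exists>G d. finite G \<and> G \<subseteq> Q \<and> d > 0 \<and>
      (\<forall>x\<in>V. \<forall>y\<in>V. (\<forall>q\<in>G. q (y - x) < d) \<longrightarrow> (\<forall>p\<in>F. p (y - x) < e))"
    and U: "sn_open V P U"
  shows "sn_open V Q U"
proof -
  have UV: "U \<subseteq> V" using U unfolding sn_open_def by blast
  have "\<exists>G d. finite G \<and> G \<subseteq> Q \<and> 0 < d \<and> {y\<in>V. \<forall>q\<in>G. q (y - x) < d} \<subseteq> U" if x: "x \<in> U" for x
  proof -
    obtain F e where F: "finite F" "F \<subseteq> P" "0 < e" "{y\<in>V. \<forall>p\<in>F. p (y - x) < e} \<subseteq> U"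
      using U x unfolding sn_open_def by blast
    obtain G d where G: "finite G" "G \<subseteq> Q" "d > 0"
      "\<forall>x\<in>V. \<forall>y\<in>V. (\<forall>q\<in>G. q (y - x) < d) \<longrightarrow> (\<forall>p\<in>F. p (y - x) < e)"
      using dom[OF F(1-3)] by blast
    have "{y\<in>V. \<forall>q\<in>G. q (y - x) < d} \<subseteq> U"
      using G(4) F(4) x UV by blast
    then show ?thesis using G by blast
  qed
  then show ?thesis using UV unfolding sn_open_def by blast
qed

lemma seminorm_topology_single_eqI:
  assumes nonneg: "\<And>z. 0 \<le> N z"
    and p0: "p0 \<in> P" "\<And>x y. x \<in> V \<Longrightarrow> y \<in> V \<Longrightarrow> N (y - x) \<le> p0 (y - x)"
    and dom: "\<And>p. p \<in> P \<Longrightarrow> \<exists>M\<ge>0. \<forall>x\<in>V. \<forall>y\<in>V. p (y - x) \<le> M * N (y - x)"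
  shows "seminorm_topology V {N} = seminorm_topology V P"
proof -
  have "sn_open V P U" if "sn_open V {N} U" for U
  proof (rule sn_open_dominated[OF _ that])
    fix F e assume F: "finite F" "F \<subseteq> {N}" "(e::real) > 0"
    have "\<forall>x\<in>V. \<forall>y\<in>V. (\<forall>q\<in>{p0}. q (y - x) < e) \<longrightarrow> (\<forall>p\<in>F. p (y - x) < e)"
      using F(2) p0(2) by fastforce
    then show "\<exists>G d. finite G \<and> G \<subseteq> P \<and> d > 0 \<and>
        (\<forall>x\<in>V. \<forall>y\<in>V. (\<forall>q\<in>G. q (y - x) < d) \<longrightarrow> (\<forall>p\<in>F. p (y - x) < e))"
      using p0(1) F(3) by (intro exI[of _ "{p0}"] exI[of _ e]) auto
  qed
  moreover have "sn_open V {N} U" if "sn_open V P U" for U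
  proof (rule sn_open_dominated[OF _ that])
    fix F e assume F: "finite F" "F \<subseteq> P" "(e::real) > 0"
    then have "\<forall>p\<in>F. \<exists>M\<ge>0. \<forall>x\<in>V. \<forall>y\<in>V. p (y - x) \<le> M * N (y - x)"
      using dom by blast
    then obtain M where M: "\<And>p. p \<in> F \<Longrightarrow> M p \<ge> 0 \<and> (\<forall>x\<in>V. \<forall>y\<in>V. p (y - x) \<le> M p * N (y - x))"
      by metis
    define S where "S = (\<Sum>p\<in>F. M p)"
    have S: "S \<ge> 0" "\<And>p. p \<in> F \<Longrightarrow> M p \<le> S"
      unfolding S_def using M F(1) by (auto intro: sum_nonneg member_le_sum)
    define d where "d = e / (1 + S)"
    have d: "d > 0" "S * d < e"
      using F(3) S(1) by (simp_all add: d_def field_simps)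
    have "(\<forall>q\<in>{N}. q (y - x) < d) \<longrightarrow> (\<forall>p\<in>F. p (y - x) < e)" if "x \<in> V" "y \<in> V" for x y
    proof (intro impI ballI)
      fix p assume "\<forall>q\<in>{N}. q (y - x) < d" and p: "p \<in> F"
      then have "N (y - x) < d" by simp
      have "p (y - x) \<le> M p * N (y - x)" using M p that by blast
      also have "\<dots> \<le> S * N (y - x)" using S(2)[OF p] nonneg by (simp add: mult_right_mono)
      also have "\<dots> \<le> S * d" using \<open>N (y - x) < d\<close> S(1) by (simp add: mult_left_mono)
      finally show "p (y - x) < e" using d(2) by simp
    qed
    then show "\<exists>G d. finite G \<and> G \<subseteq> {N} \<and> d > 0 \<and>
        (\<forall>x\<in>V. \<forall>y\<in>V. (\<forall>q\<in>G. q (y - x) < d) \<longrightarrow> (\<forall>p\<in>F. p (y - x) < e))"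
      using d(1) by (intro exI[of _ "{N}"] exI[of _ d]) auto
  qed
  ultimately show ?thesis
    by (subst topology_eq) (auto simp: openin_seminorm_topology)
qed

section \<open>Orthonormal sequences\<close>

definition orthonormal_seq :: "(nat \<Rightarrow> 'a::complex_inner) \<Rightarrow> bool" where
  "orthonormal_seq e \<longleftrightarrow> (\<forall>n m. cinner (e n) (e m) = (if n = m then 1 else 0))"

lemma orthonormal_seqD: "orthonormal_seq e \<Longrightarrow> cinner (e n) (e m) = (if n = m then 1 else 0)"
  unfolding orthonormal_seq_def by blast

lemma cinner_orthonormal_sum_right:
  assumes "orthonormal_seq e" "finite A"
  shows "cinner (e k) (\<Sum>n\<in>A. c n *\<^sub>C e n) = (if k \<in> A then cnj (c k) else 0)"
proof -
  have "cinner (e k) (\<Sum>n\<in>A. c n *\<^sub>C e n) = (\<Sum>n\<in>A. if k = n then cnj (c n) else 0)"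
    using assms(1)
    by (simp add: orthonormal_seqD cinner_sum_right cinner_scaleC_right if_distrib cong: if_cong)
  then show ?thesis using assms(2) by simp
qed

lemma cinner_orthonormal_sum_left:
  assumes "orthonormal_seq e" "finite A"
  shows "cinner (\<Sum>n\<in>A. c n *\<^sub>C e n) (e k) = (if k \<in> A then c k else 0)"
proof -
  have "cinner (\<Sum>n\<in>A. c n *\<^sub>C e n) (e k) = (\<Sum>n\<in>A. if n = k then c n else 0)"
    using assms(1)
    by (simp add: orthonormal_seqD cinner_sum_left cinner_scaleC_left if_distrib cong: if_cong)
  then show ?thesis using assms(2) by simp
qed

lemma norm_orthonormal_sum_squared:
  assumes "orthonormal_seq e" "finite A"
  shows "(norm (\<Sum>n\<in>A. c n *\<^sub>C e n))\<^sup>2 = (\<Sum>n\<in>A. (cmod (c n))\<^sup>2)"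
proof -
  let ?s = "\<Sum>n\<in>A. c n *\<^sub>C e n"
  have "complex_of_real ((norm ?s)\<^sup>2) = cinner ?s ?s"
    by (rule cinner_self[symmetric])
  also have "\<dots> = (\<Sum>m\<in>A. c m * cinner (e m) ?s)"
    by (simp add: cinner_sum_left cinner_scaleC_left)
  also have "\<dots> = (\<Sum>m\<in>A. complex_of_real ((cmod (c m))\<^sup>2))"
    using assms by (intro sum.cong) (auto simp: cinner_orthonormal_sum_right complex_norm_square simp del: of_real_power)
  finally show ?thesis by (simp only: of_real_sum[symmetric] of_real_eq_iff)
qed

lemma riesz_fischer:
  fixes e :: "nat \<Rightarrow> 'a::{complex_inner,complete_space}"
  assumes e: "orthonormal_seq e" and bound: "\<And>N. (\<Sum>n<N. (cmod (a n))\<^sup>2) \<le> K"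
  shows "\<exists>r. (\<lambda>N. \<Sum>n<N. a n *\<^sub>C e n) \<longlonglongrightarrow> r \<and> (\<forall>k. cinner r (e k) = a k)"
proof -
  define s where "s N = (\<Sum>n<N. a n *\<^sub>C e n)" for N
  have "summable (\<lambda>n. (cmod (a n))\<^sup>2)"
    using bound by (intro summableI_nonneg_bounded) auto
  then have tail: "\<exists>M. \<forall>m\<ge>M. \<forall>n. norm (\<Sum>k\<in>{m..<n}. (cmod (a k))\<^sup>2) < \<epsilon>" if "\<epsilon> > 0" for \<epsilon>
    using that unfolding summable_Cauchy by blast
  have "Cauchy s"
  proof (rule CauchyI')
    fix \<epsilon> :: real assume \<epsilon>: "\<epsilon> > 0"
    then obtain M where M: "\<forall>m\<ge>M. \<forall>n. norm (\<Sum>k\<in>{m..<n}. (cmod (a k))\<^sup>2) < \<epsilon>\<^sup>2"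
      using tail[of "\<epsilon>\<^sup>2"] by auto
    have "dist (s m) (s n) < \<epsilon>" if "m \<ge> M" "n > m" for m n
    proof -
      have "s n - s m = (\<Sum>k\<in>{m..<n}. a k *\<^sub>C e k)"
        unfolding s_def using sum_diff_nat_ivl[of 0 m n] that by (simp add: lessThan_atLeast0)
      moreover have "dist (s m) (s n) = norm (s n - s m)"
        by (simp add: dist_norm norm_minus_commute)
      ultimately have "(dist (s m) (s n))\<^sup>2 = (\<Sum>k\<in>{m..<n}. (cmod (a k))\<^sup>2)"
        by (simp add: norm_orthonormal_sum_squared[OF e])
      also have "\<dots> < \<epsilon>\<^sup>2"
        using M that by (simp add: sum_nonneg)
      finally show ?thesis using \<epsilon> by (simp add: power_less_imp_less_base)
    qed
    then show "\<exists>M. \<forall>m\<ge>M. \<forall>n>m. dist (s m) (s n) < \<epsilon>" by blast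
  qed
  then obtain r where r: "s \<longlonglongrightarrow> r" using Cauchy_convergent_iff convergent_def by blast
  have "cinner r (e k) = a k" for k
  proof (rule LIMSEQ_unique[OF tendsto_cinner_left[OF r]])
    have "\<forall>N\<ge>Suc k. cinner (s N) (e k) = a k"
      by (simp add: s_def cinner_orthonormal_sum_left[OF e])
    then show "(\<lambda>N. cinner (s N) (e k)) \<longlonglongrightarrow> a k"
      by (intro tendsto_eventually) (auto simp: eventually_sequentially)
  qed
  then show ?thesis using r unfolding s_def by blast
qed

section \<open>Locally convex spaces isomorphic to a Hilbert space\<close>

locale hilbert_iso =
  fixes D :: "'h::{complex_inner,complete_space} set" and t :: "'h topology" and T :: "'h \<Rightarrow> 'h"
  assumes D_csubspace: "csubspace D" and topspace_t: "topspace t = D"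
    and T_clinear: "clinear_on D T" and T_inj: "inj_on T D" and T_surj: "T ` D = UNIV"
    and T_continuous: "continuous_map t euclidean T"
    and T_inv_continuous: "continuous_map euclidean t (inv_into D T)"
begin

abbreviation T_inv :: "'h \<Rightarrow> 'h" where "T_inv \<equiv> inv_into D T"

lemma D_zero: "0 \<in> D" and D_add: "x \<in> D \<Longrightarrow> y \<in> D \<Longrightarrow> x + y \<in> D"
  and D_scaleC: "x \<in> D \<Longrightarrow> a *\<^sub>C x \<in> D"
  using D_csubspace unfolding csubspace_def by auto

lemma D_minus: "x \<in> D \<Longrightarrow> - x \<in> D"
  using D_scaleC[of x "-1"] by (simp add: scaleC_minus_one)

lemma D_sum: "(\<And>i. i \<in> A \<Longrightarrow> f i \<in> D) \<Longrightarrow> sum f A \<in> D"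
  by (induction A rule: infinite_finite_induct) (auto simp: D_zero D_add)

lemma T_add: "x \<in> D \<Longrightarrow> y \<in> D \<Longrightarrow> T (x + y) = T x + T y"
  and T_scaleC: "x \<in> D \<Longrightarrow> T (a *\<^sub>C x) = a *\<^sub>C T x"
  using T_clinear unfolding clinear_on_def by blast+

lemma T_zero [simp]: "T 0 = 0"
  using T_scaleC[OF D_zero, of 0] by simp

lemma T_minus: "x \<in> D \<Longrightarrow> T (- x) = - T x"
  using T_scaleC[of x "-1"] by (simp add: scaleC_minus_one)

lemma T_diff: "x \<in> D \<Longrightarrow> y \<in> D \<Longrightarrow> T (x - y) = T x - T y"
  by (simp only: diff_conv_add_uminus T_add D_minus T_minus)

lemma T_sum: "(\<And>i. i \<in> A \<Longrightarrow> f i \<in> D) \<Longrightarrow> T (sum f A) = (\<Sum>i\<in>A. T (f i))"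
  by (induction A rule: infinite_finite_induct) (auto simp: T_add D_sum)

lemma T_inv_in_D: "T_inv h \<in> D"
  by (metis UNIV_I inv_into_into T_surj)

lemma T_T_inv [simp]: "T (T_inv h) = h"
  by (metis UNIV_I f_inv_into_f T_surj)

lemma T_inv_T: "x \<in> D \<Longrightarrow> T_inv (T x) = x"
  by (simp add: T_inj)

lemma T_eq_0_iff: "x \<in> D \<Longrightarrow> T x = 0 \<longleftrightarrow> x = 0"
  by (metis D_zero T_zero T_inj inj_onD)

lemma openin_contains_T_ball:
  assumes U: "openin t U" and x: "x \<in> U"
  shows "\<exists>e>0. \<forall>y\<in>D. norm (T y - T x) < e \<longrightarrow> y \<in> U"
proof -
  have "open {h. T_inv h \<in> U}"
    using openin_continuous_map_preimage[OF T_inv_continuous U] by simp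
  moreover have "T x \<in> {h. T_inv h \<in> U}"
    using x U openin_subset topspace_t T_inv_T by fastforce
  ultimately obtain e where e: "e > 0" "ball (T x) e \<subseteq> {h. T_inv h \<in> U}"
    using open_contains_ball by blast
  have "y \<in> U" if "y \<in> D" "norm (T y - T x) < e" for y
  proof -
    have "T y \<in> ball (T x) e" using that by (simp add: dist_norm norm_minus_commute)
    then show ?thesis using e(2) T_inv_T[OF \<open>y \<in> D\<close>] by auto
  qed
  then show ?thesis using e(1) by blast
qed

lemma topology_eq_T_norm: "t = seminorm_topology D {\<lambda>x. norm (T x)}"
proof (subst topology_eq, intro allI iffI)
  fix U assume U: "openin t U"
  have UD: "U \<subseteq> D" using U openin_subset topspace_t by blast
  have "\<exists>F e. finite F \<and> F \<subseteq> {\<lambda>x. norm (T x)} \<and> 0 < e \<and> {y\<in>D. \<forall>p\<in>F. p (y - x) < e} \<subseteq> U"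
    if x: "x \<in> U" for x
  proof -
    obtain e where e: "e > 0" "\<forall>y\<in>D. norm (T y - T x) < e \<longrightarrow> y \<in> U"
      using openin_contains_T_ball[OF U x] by blast
    have "{y\<in>D. \<forall>p\<in>{\<lambda>x. norm (T x)}. p (y - x) < e} \<subseteq> U"
      using e x UD by (auto simp: T_diff)
    then show ?thesis using e by (intro exI[of _ "{\<lambda>x. norm (T x)}"] exI[of _ e]) auto
  qed
  then show "openin (seminorm_topology D {\<lambda>x. norm (T x)}) U"
    using UD unfolding openin_seminorm_topology sn_open_def by blast
next
  fix U assume "openin (seminorm_topology D {\<lambda>x. norm (T x)}) U"
  then have U: "sn_open D {\<lambda>x. norm (T x)} U" by (simp add: openin_seminorm_topology)
  have UD: "U \<subseteq> D" using U unfolding sn_open_def by blast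
  \<comment> \<open>\<open>U\<close> is \<open>t\<close>-open as the preimage of the open set \<open>T ` U\<close> under \<open>T\<close>\<close>
  have "open (T ` U)"
    unfolding open_contains_ball
  proof
    fix h assume "h \<in> T ` U"
    then obtain x where x: "x \<in> U" "h = T x" by blast
    then obtain F e where F: "F \<subseteq> {\<lambda>x. norm (T x)}" "0 < e" "{y\<in>D. \<forall>p\<in>F. p (y - x) < e} \<subseteq> U"
      using U unfolding sn_open_def by blast
    have "T_inv h' \<in> U" if "h' \<in> ball h e" for h'
    proof -
      have "T (T_inv h' - x) = h' - h"
        using x UD T_diff[OF T_inv_in_D] by auto
      then have "norm (T (T_inv h' - x)) < e"
        using that by (simp add: dist_norm norm_minus_commute)
      then show ?thesis using F T_inv_in_D by blast
    qed
    then have "ball h e \<subseteq> T ` U" by (metis T_T_inv image_eqI subsetI)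
    then show "\<exists>e>0. ball h e \<subseteq> T ` U" using F(2) by blast
  qed
  then have "openin t {x \<in> topspace t. T x \<in> T ` U}"
    by (intro openin_continuous_map_preimage[OF T_continuous]) simp
  moreover have "{x \<in> topspace t. T x \<in> T ` U} = U"
    using UD topspace_t T_inj by (auto simp: inj_on_image_mem_iff dest: inj_onD)
  ultimately show "openin t U" by simp
qed

lemma cdual_zero: "\<Phi> \<in> cdual D t \<Longrightarrow> \<Phi> 0 = 0"
  unfolding cdual_def conjlinear_on_def using D_zero
  by (metis (mono_tags, lifting) complex_cnj_zero mem_Collect_eq mult_zero_left scaleC_zero_left)

lemma cdual_sum_scaleC:
  assumes \<Phi>: "\<Phi> \<in> cdual D t" and g: "\<And>i. i \<in> A \<Longrightarrow> g i \<in> D"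
  shows "\<Phi> (\<Sum>i\<in>A. a i *\<^sub>C g i) = (\<Sum>i\<in>A. cnj (a i) * \<Phi> (g i))"
  using g
proof (induction A rule: infinite_finite_induct)
  case (insert x F)
  have cl: "conjlinear_on D \<Phi>" using \<Phi> unfolding cdual_def by blast
  have "a x *\<^sub>C g x \<in> D" "(\<Sum>i\<in>F. a i *\<^sub>C g i) \<in> D"
    using insert D_scaleC by (auto intro!: D_sum)
  then have "\<Phi> (\<Sum>i\<in>insert x F. a i *\<^sub>C g i) = cnj (a x) * \<Phi> (g x) + \<Phi> (\<Sum>i\<in>F. a i *\<^sub>C g i)"
    using insert cl unfolding conjlinear_on_def by simp
  then show ?case using insert by simp
qed (simp_all add: cdual_zero[OF \<Phi>])

lemma cdual_bounded_by_T_norm: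
  assumes \<Phi>: "\<Phi> \<in> cdual D t"
  shows "\<exists>K>0. \<forall>f\<in>D. cmod (\<Phi> f) \<le> K * norm (T f)"
proof -
  have cont: "continuous_map t euclidean \<Phi>" and cl: "conjlinear_on D \<Phi>"
    using \<Phi> unfolding cdual_def by auto
  define U where "U = {f \<in> topspace t. \<Phi> f \<in> ball 0 1}"
  have U: "openin t U" unfolding U_def by (rule openin_continuous_map_preimage[OF cont]) simp
  have "0 \<in> U" unfolding U_def using topspace_t D_zero cdual_zero[OF \<Phi>] by simp
  then obtain e where "e > 0" "\<forall>y\<in>D. norm (T y - T 0) < e \<longrightarrow> y \<in> U"
    using openin_contains_T_ball[OF U] by blast
  then have e: "e > 0" "\<forall>y\<in>D. norm (T y) < e \<longrightarrow> cmod (\<Phi> y) < 1"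
    by (auto simp: U_def)
  have "cmod (\<Phi> f) \<le> 2 / e * norm (T f)" if f: "f \<in> D" for f
  proof (cases "T f = 0")
    case True
    then show ?thesis using T_eq_0_iff f cdual_zero[OF \<Phi>] by simp
  next
    case False
    \<comment> \<open>rescale \<open>f\<close> into the \<open>T\<close>-ball of radius \<open>e\<close>\<close>
    define l where "l = e / (2 * norm (T f))"
    have l: "l > 0" using False e by (simp add: l_def)
    have "norm (T (complex_of_real l *\<^sub>C f)) = l * norm (T f)"
      using f l by (simp add: T_scaleC norm_scaleC)
    also have "\<dots> = e / 2" using False by (simp add: l_def)
    finally have "norm (T (complex_of_real l *\<^sub>C f)) < e" using e by simp
    then have "cmod (\<Phi> (complex_of_real l *\<^sub>C f)) < 1" using e f D_scaleC by simp
    moreover have "\<Phi> (complex_of_real l *\<^sub>C f) = complex_of_real l * \<Phi> f"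
      using cl f unfolding conjlinear_on_def by simp
    ultimately have "l * cmod (\<Phi> f) < 1" using l by (simp add: norm_mult)
    then have "cmod (\<Phi> f) < 1 / l" using l by (simp add: field_simps)
    also have "1 / l = 2 / e * norm (T f)" using e by (simp add: l_def)
    finally show ?thesis by simp
  qed
  then show ?thesis using e(1) by (intro exI[of _ "2 / e"]) auto
qed

lemma tvs_bounded_imp_T_bounded:
  assumes B: "tvs_bounded t B"
  shows "\<exists>M\<ge>0. \<forall>f\<in>B. norm (T f) \<le> M"
proof -
  define U where "U = {f \<in> topspace t. T f \<in> ball 0 1}"
  have U: "openin t U" unfolding U_def by (rule openin_continuous_map_preimage[OF T_continuous]) simp
  have "0 \<in> U" unfolding U_def using topspace_t D_zero by simp
  then obtain s where s: "s > 0" "\<forall>a. s \<le> cmod a \<longrightarrow> B \<subseteq> (\<lambda>x. a *\<^sub>C x) ` U"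
    using B U unfolding tvs_bounded_def by blast
  have "norm (T f) \<le> s" if fB: "f \<in> B" for f
  proof -
    have "B \<subseteq> (\<lambda>x. complex_of_real s *\<^sub>C x) ` U" using s by simp
    then obtain u where u: "u \<in> U" "f = complex_of_real s *\<^sub>C u" using fB by blast
    then have "u \<in> D" "norm (T u) < 1" using topspace_t unfolding U_def by auto
    then show ?thesis using u s by (simp add: T_scaleC norm_scaleC)
  qed
  then show ?thesis using s by (intro exI[of _ s]) auto
qed

lemma tvs_bounded_T_unit_ball: "tvs_bounded t {f \<in> D. norm (T f) \<le> 1}"
  unfolding tvs_bounded_def
proof (intro conjI allI impI)
  show "{f \<in> D. norm (T f) \<le> 1} \<subseteq> topspace t" using topspace_t by blast
next
  fix U assume "openin t U \<and> 0 \<in> U"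
  then obtain e where "e > 0" "\<forall>y\<in>D. norm (T y - T 0) < e \<longrightarrow> y \<in> U"
    using openin_contains_T_ball by blast
  then have e: "e > 0" "\<forall>y\<in>D. norm (T y) < e \<longrightarrow> y \<in> U" by auto
  have "f \<in> (\<lambda>x. a *\<^sub>C x) ` U" if a: "2 / e \<le> cmod a" and f: "f \<in> D" "norm (T f) \<le> 1" for a f
  proof -
    have a0: "cmod a > 0" using a e by (meson divide_pos_pos less_le_trans zero_less_numeral)
    define u where "u = inverse a *\<^sub>C f"
    have "norm (T u) = norm (T f) / cmod a"
      using f by (simp add: u_def T_scaleC norm_scaleC norm_inverse divide_inverse mult.commute)
    also have "\<dots> \<le> 1 / cmod a" using f a0 by (simp add: divide_right_mono)
    also have "\<dots> < e" using a e a0 by (simp add: field_simps)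
    finally have "u \<in> U" using e f D_scaleC unfolding u_def by blast
    moreover have "a *\<^sub>C u = f" using a0 by (simp add: u_def scaleC_scaleC scaleC_one)
    ultimately show ?thesis by force
  qed
  then show "\<exists>s>0. \<forall>a. s \<le> cmod a \<longrightarrow> {f \<in> D. norm (T f) \<le> 1} \<subseteq> (\<lambda>x. a *\<^sub>C x) ` U"
    using e(1) by (intro exI[of _ "2 / e"]) auto
qed

definition T_ip :: "'h \<Rightarrow> 'h \<Rightarrow> complex" where
  "T_ip x y = cinner (T x) (T y)"

lemma ip_norm_T_ip: "ip_norm T_ip = (\<lambda>x. norm (T x))"
  by (simp add: fun_eq_iff ip_norm_def T_ip_def norm_eq_sqrt_cinner)

lemma hilbert_ip_on_T_ip: "hilbert_ip_on D T_ip"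
proof -
  have complete: "\<exists>x\<in>D. (\<lambda>n. norm (T (s n - x))) \<longlonglongrightarrow> 0"
    if s: "\<forall>n. s n \<in> D" and C: "\<forall>\<epsilon>>0. \<exists>N. \<forall>m\<ge>N. \<forall>n\<ge>N. norm (T (s m - s n)) < \<epsilon>" for s
  proof -
    have "Cauchy (\<lambda>n. T (s n))"
      using C s by (intro CauchyI) (metis T_diff)
    then obtain h where "(\<lambda>n. T (s n)) \<longlonglongrightarrow> h" using Cauchy_convergent_iff convergent_def by blast
    then have "(\<lambda>n. norm (T (s n) - h)) \<longlonglongrightarrow> 0"
      using LIM_zero tendsto_norm_zero by blast
    moreover have "T (s n - T_inv h) = T (s n) - h" for n using s T_inv_in_D by (simp add: T_diff)
    ultimately show ?thesis using T_inv_in_D by (intro bexI[of _ "T_inv h"]) auto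
  qed
  show ?thesis
    unfolding hilbert_ip_on_def ip_norm_T_ip
    using D_csubspace complete
    by (auto simp: T_ip_def T_add T_scaleC cinner_add_left cinner_scaleC_left cinner_ge_zero
        cinner_eq_zero_iff T_eq_0_iff intro: cinner_commute)
qed

definition dual_rep :: "'h \<Rightarrow> 'h \<Rightarrow> complex" where
  "dual_rep r = (\<lambda>f. if f \<in> D then cinner r (T f) else 0)"

lemma dual_rep_in_cdual: "dual_rep r \<in> cdual D t"
proof -
  have "conjlinear_on D (dual_rep r)"
    unfolding conjlinear_on_def dual_rep_def
    by (auto simp: D_add D_scaleC T_add T_scaleC cinner_add_right cinner_scaleC_right)
  moreover have "continuous_map t euclidean (cinner r \<circ> T)"
    by (intro continuous_map_compose[OF T_continuous])
      (simp add: linear_continuous_on[OF bounded_linear_cinner_right])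
  then have "continuous_map t euclidean (dual_rep r)"
    by (rule continuous_map_eq) (auto simp: dual_rep_def topspace_t)
  ultimately show ?thesis unfolding cdual_def by (auto simp: dual_rep_def)
qed

lemma dual_rep_add: "dual_rep r1 + dual_rep r2 = dual_rep (r1 + r2)"
  by (auto simp: dual_rep_def fun_eq_iff cinner_add_left)

lemma dual_rep_scaleC: "a *\<^sub>C dual_rep r = dual_rep (a *\<^sub>C r)"
  by (auto simp: dual_rep_def fun_eq_iff scaleC_fun_def scaleC_complex_def cinner_scaleC_left)

lemma dual_rep_diff: "dual_rep r1 - dual_rep r2 = dual_rep (r1 - r2)"
  by (auto simp: dual_rep_def fun_eq_iff cinner_diff_left)

lemma dual_rep_zero: "dual_rep 0 = 0"
  by (auto simp: dual_rep_def fun_eq_iff)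

lemma dual_rep_sum: "(\<Sum>i\<in>A. dual_rep (g i)) = dual_rep (\<Sum>i\<in>A. g i)"
  by (induction A rule: infinite_finite_induct) (auto simp: dual_rep_zero dual_rep_add)

lemma inj_dual_rep: "inj dual_rep"
proof
  fix r1 r2 assume "dual_rep r1 = dual_rep r2"
  then have "dual_rep r1 (T_inv (r1 - r2)) = dual_rep r2 (T_inv (r1 - r2))" by simp
  then have "cinner (r1 - r2) (r1 - r2) = 0"
    using T_inv_in_D by (simp add: dual_rep_def cinner_diff_left)
  then show "r1 = r2" by (simp add: cinner_eq_zero_iff)
qed

lemma norm_dual_rep_le: "cmod (dual_rep r f) \<le> norm r * norm (T f)"
  by (simp add: dual_rep_def norm_cinner_le)

lemma dual_rep_attains_norm: "\<exists>f\<in>D. norm (T f) \<le> 1 \<and> cmod (dual_rep r f) = norm r"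
proof (cases "r = 0")
  case True then show ?thesis using D_zero by (intro bexI[of _ 0]) (auto simp: dual_rep_def)
next
  case False
  define h where "h = complex_of_real (1 / norm r) *\<^sub>C r"
  have "norm h = 1" using False by (simp add: h_def norm_scaleC norm_divide)
  moreover have "dual_rep r (T_inv h) = complex_of_real (norm r)"
    using T_inv_in_D False by (simp add: dual_rep_def h_def cinner_scaleC_right cinner_self power2_eq_square)
  ultimately show ?thesis using T_inv_in_D by (intro bexI[of _ "T_inv h"]) auto
qed

lemma norm_eq_Sup_dual_rep: "norm r = Sup {cmod (dual_rep r f) |f. f \<in> D \<and> norm (T f) \<le> 1}"
proof (rule cSup_eq_maximum[symmetric])
  obtain f where "f \<in> D" "norm (T f) \<le> 1" "cmod (dual_rep r f) = norm r"
    using dual_rep_attains_norm by blast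
  then show "norm r \<in> {cmod (dual_rep r f) |f. f \<in> D \<and> norm (T f) \<le> 1}"
    by (intro CollectI exI[of _ f]) simp
  show "x \<le> norm r" if x: "x \<in> {cmod (dual_rep r f) |f. f \<in> D \<and> norm (T f) \<le> 1}" for x
  proof -
    obtain f where f: "x = cmod (dual_rep r f)" "norm (T f) \<le> 1" using x by blast
    have "x \<le> norm r * norm (T f)" using f(1) norm_dual_rep_le by simp
    also have "\<dots> \<le> norm r" using f(2) by (simp add: mult_left_le)
    finally show ?thesis .
  qed
qed

lemma Sup_dual_rep_T_unit_ball:
  "Sup (insert 0 ((\<lambda>f. cmod (dual_rep r f)) ` {f \<in> D. norm (T f) \<le> 1})) = norm r"
proof -
  have "(\<lambda>f. cmod (dual_rep r f)) ` {f \<in> D. norm (T f) \<le> 1}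
      = {cmod (dual_rep r f) |f. f \<in> D \<and> norm (T f) \<le> 1}"
    by blast
  moreover have "0 \<in> {cmod (dual_rep r f) |f. f \<in> D \<and> norm (T f) \<le> 1}"
    using D_zero by (intro CollectI exI[of _ 0]) (simp add: dual_rep_def)
  ultimately have "insert 0 ((\<lambda>f. cmod (dual_rep r f)) ` {f \<in> D. norm (T f) \<le> 1})
      = {cmod (dual_rep r f) |f. f \<in> D \<and> norm (T f) \<le> 1}"
    by blast
  then show ?thesis by (simp only: norm_eq_Sup_dual_rep[symmetric])
qed

lemma Sup_dual_rep_tvs_bounded_le:
  assumes "tvs_bounded t B"
  shows "\<exists>M\<ge>0. \<forall>r. Sup (insert 0 ((\<lambda>f. cmod (dual_rep r f)) ` B)) \<le> M * norm r"
proof -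
  obtain M where M: "M \<ge> 0" "\<forall>f\<in>B. norm (T f) \<le> M"
    using tvs_bounded_imp_T_bounded[OF assms] by blast
  have "cmod (dual_rep r f) \<le> M * norm r" if "f \<in> B" for r f
  proof -
    have "cmod (dual_rep r f) \<le> norm r * norm (T f)" by (rule norm_dual_rep_le)
    also have "\<dots> \<le> norm r * M" using M that by (simp add: mult_left_mono)
    finally show ?thesis by (simp add: mult.commute)
  qed
  then have "Sup (insert 0 ((\<lambda>f. cmod (dual_rep r f)) ` B)) \<le> M * norm r" for r
    using M(1) by (intro cSup_least) auto
  then show ?thesis using M(1) by blast
qed

end

locale hilbert_iso_basis = hilbert_iso D t T for D :: "'h::{complex_inner,complete_space} set" and t T +
  fixes \<xi> :: "nat \<Rightarrow> 'h"
  assumes schauder: "schauder_basis D t \<xi>" and onb_T_\<xi>: "onb_on UNIV cinner (T \<circ> \<xi>)"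
begin

lemma \<xi>_in_D: "\<xi> n \<in> D"
  using schauder unfolding schauder_basis_def by auto

lemma orthonormal_T_\<xi>: "orthonormal_seq (\<lambda>n. T (\<xi> n))"
  using onb_T_\<xi> unfolding onb_on_def orthonormal_seq_def by auto

lemma T_\<xi>_span_dense: "\<epsilon> > 0 \<Longrightarrow> \<exists>N c. norm (h - (\<Sum>n<N. c n *\<^sub>C T (\<xi> n))) < \<epsilon>"
  using onb_T_\<xi> unfolding onb_on_def by (simp add: ip_norm_cinner)

abbreviation coeff :: "'h \<Rightarrow> nat \<Rightarrow> complex" where
  "coeff f \<equiv> schauder_coeffs t \<xi> f"

lemma schauder_expansion:
  assumes "f \<in> D"
  shows "limitin t (\<lambda>N. \<Sum>n<N. coeff f n *\<^sub>C \<xi> n) f sequentially"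
proof -
  have "\<exists>!c. limitin t (\<lambda>N. \<Sum>n<N. c n *\<^sub>C \<xi> n) f sequentially"
    using schauder assms unfolding schauder_basis_def by blast
  then show ?thesis unfolding schauder_coeffs_def by (rule theI')
qed

lemma T_schauder_expansion:
  assumes f: "f \<in> D"
  shows "(\<lambda>N. \<Sum>n<N. coeff f n *\<^sub>C T (\<xi> n)) \<longlonglongrightarrow> T f"
proof -
  have "limitin euclidean (T \<circ> (\<lambda>N. \<Sum>n<N. coeff f n *\<^sub>C \<xi> n)) (T f) sequentially"
    by (rule continuous_map_limit[OF T_continuous schauder_expansion[OF f]])
  moreover have "T \<circ> (\<lambda>N. \<Sum>n<N. coeff f n *\<^sub>C \<xi> n) = (\<lambda>N. \<Sum>n<N. coeff f n *\<^sub>C T (\<xi> n))"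
    by (auto simp: fun_eq_iff T_sum T_scaleC D_scaleC \<xi>_in_D)
  ultimately show ?thesis by simp
qed

lemma cdual_schauder_expansion:
  assumes \<Phi>: "\<Phi> \<in> cdual D t" and f: "f \<in> D"
  shows "(\<lambda>N. \<Sum>n<N. cnj (coeff f n) * \<Phi> (\<xi> n)) \<longlonglongrightarrow> \<Phi> f"
proof -
  have "continuous_map t euclidean \<Phi>" using \<Phi> unfolding cdual_def by blast
  then have "limitin euclidean (\<Phi> \<circ> (\<lambda>N. \<Sum>n<N. coeff f n *\<^sub>C \<xi> n)) (\<Phi> f) sequentially"
    by (rule continuous_map_limit[OF _ schauder_expansion[OF f]])
  moreover have "\<Phi> \<circ> (\<lambda>N. \<Sum>n<N. coeff f n *\<^sub>C \<xi> n) = (\<lambda>N. \<Sum>n<N. cnj (coeff f n) * \<Phi> (\<xi> n))"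
    by (auto simp: fun_eq_iff cdual_sum_scaleC[OF \<Phi>] \<xi>_in_D)
  ultimately show ?thesis by simp
qed

lemma cdual_bessel:
  assumes \<Phi>: "\<Phi> \<in> cdual D t"
  shows "\<exists>K. \<forall>N. (\<Sum>n<N. (cmod (\<Phi> (\<xi> n)))\<^sup>2) \<le> K"
proof -
  obtain K where K: "K > 0" "\<forall>f\<in>D. cmod (\<Phi> f) \<le> K * norm (T f)"
    using cdual_bounded_by_T_norm[OF \<Phi>] by blast
  have "(\<Sum>n<N. (cmod (\<Phi> (\<xi> n)))\<^sup>2) \<le> K\<^sup>2" for N
  proof -
    define P where "P = (\<Sum>n<N. (cmod (\<Phi> (\<xi> n)))\<^sup>2)"
    \<comment> \<open>test \<open>\<Phi>\<close> on the vector whose coefficients are the values \<open>\<Phi> (\<xi>\<^sub>n)\<close>\<close>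
    define h where "h = (\<Sum>n<N. \<Phi> (\<xi> n) *\<^sub>C \<xi> n)"
    have "h \<in> D" unfolding h_def using \<xi>_in_D D_scaleC by (intro D_sum) auto
    have P: "P \<ge> 0" unfolding P_def by (intro sum_nonneg) simp
    have "\<Phi> h = (\<Sum>n<N. cnj (\<Phi> (\<xi> n)) * \<Phi> (\<xi> n))"
      unfolding h_def by (simp add: cdual_sum_scaleC[OF \<Phi>] \<xi>_in_D)
    also have "\<dots> = complex_of_real P"
      by (simp only: P_def of_real_sum complex_norm_square mult.commute)
    finally have "P = cmod (\<Phi> h)" using P by simp
    also have "\<dots> \<le> K * norm (T h)" using K(2) \<open>h \<in> D\<close> by blast
    finally have "P \<le> K * norm (T h)" .
    moreover have T_h: "(norm (T h))\<^sup>2 = P"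
      unfolding h_def P_def
      by (simp add: T_sum T_scaleC \<xi>_in_D D_scaleC norm_orthonormal_sum_squared[OF orthonormal_T_\<xi>])
    ultimately have "P\<^sup>2 \<le> (K * norm (T h))\<^sup>2"
      using P by (simp add: power_mono)
    then have "P * P \<le> K\<^sup>2 * P"
      using T_h by (simp only: power_mult_distrib power2_eq_square[of P])
    then show ?thesis
      using P unfolding P_def[symmetric] by (cases "P = 0") (auto simp: mult_le_cancel_right)
  qed
  then show ?thesis by blast
qed

lemma cdual_riesz_representation:
  assumes \<Phi>: "\<Phi> \<in> cdual D t"
  shows "\<Phi> \<in> range dual_rep"
proof -
  obtain K where "\<And>N. (\<Sum>n<N. (cmod (\<Phi> (\<xi> n)))\<^sup>2) \<le> K"
    using cdual_bessel[OF \<Phi>] by blast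
  then have "\<exists>r. (\<lambda>N. \<Sum>n<N. \<Phi> (\<xi> n) *\<^sub>C T (\<xi> n)) \<longlonglongrightarrow> r \<and> (\<forall>k. cinner r (T (\<xi> k)) = \<Phi> (\<xi> k))"
    by (rule riesz_fischer[OF orthonormal_T_\<xi>])
  then obtain r where r: "\<And>k. cinner r (T (\<xi> k)) = \<Phi> (\<xi> k)"
    by blast
  have "\<Phi> f = dual_rep r f" for f
  proof (cases "f \<in> D")
    case False
    then show ?thesis using \<Phi> unfolding cdual_def dual_rep_def by simp
  next
    case True
    have "(\<lambda>N. cinner r (\<Sum>n<N. coeff f n *\<^sub>C T (\<xi> n))) \<longlonglongrightarrow> cinner r (T f)"
      by (rule tendsto_cinner_right[OF T_schauder_expansion[OF True]])
    moreover have "(\<lambda>N. cinner r (\<Sum>n<N. coeff f n *\<^sub>C T (\<xi> n))) = (\<lambda>N. \<Sum>n<N. cnj (coeff f n) * \<Phi> (\<xi> n))"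
      by (simp add: cinner_sum_right cinner_scaleC_right r)
    ultimately have "\<Phi> f = cinner r (T f)"
      using cdual_schauder_expansion[OF \<Phi> True] LIMSEQ_unique by metis
    then show ?thesis using True by (simp add: dual_rep_def)
  qed
  then show ?thesis by blast
qed

lemma cdual_eq_range_dual_rep: "cdual D t = range dual_rep"
  using cdual_riesz_representation dual_rep_in_cdual by blast

definition dual_vec :: "('h \<Rightarrow> complex) \<Rightarrow> 'h" where
  "dual_vec = inv dual_rep"

lemma dual_vec_dual_rep [simp]: "dual_vec (dual_rep r) = r"
  by (simp add: dual_vec_def inj_dual_rep)

lemma dual_rep_dual_vec: "\<Phi> \<in> cdual D t \<Longrightarrow> dual_rep (dual_vec \<Phi>) = \<Phi>"
  by (simp add: dual_vec_def cdual_eq_range_dual_rep f_inv_into_f)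

lemma cdual_diff: "\<Phi> \<in> cdual D t \<Longrightarrow> \<Psi> \<in> cdual D t \<Longrightarrow> \<Psi> - \<Phi> \<in> cdual D t"
  unfolding cdual_eq_range_dual_rep by (auto simp: dual_rep_diff)

definition dual_ip :: "('h \<Rightarrow> complex) \<Rightarrow> ('h \<Rightarrow> complex) \<Rightarrow> complex" where
  "dual_ip \<Phi> \<Psi> = cinner (dual_vec \<Phi>) (dual_vec \<Psi>)"

lemma ip_norm_dual_ip: "ip_norm dual_ip = (\<lambda>\<Phi>. norm (dual_vec \<Phi>))"
  by (simp add: fun_eq_iff ip_norm_def dual_ip_def norm_eq_sqrt_cinner)

lemma hilbert_ip_on_dual_ip: "hilbert_ip_on (cdual D t) dual_ip"
proof -
  have "csubspace (range dual_rep)"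
    unfolding csubspace_def
    by (auto simp: dual_rep_add dual_rep_scaleC dual_rep_zero[symmetric] intro: range_eqI)
  moreover have "\<exists>x\<in>range dual_rep. (\<lambda>n. ip_norm dual_ip (s n - x)) \<longlonglongrightarrow> 0"
    if s: "\<forall>n. s n \<in> range dual_rep"
      and C: "\<forall>\<epsilon>>0. \<exists>N. \<forall>m\<ge>N. \<forall>n\<ge>N. ip_norm dual_ip (s m - s n) < \<epsilon>" for s
  proof -
    define u where "u n = dual_vec (s n)" for n
    have s_u: "s n = dual_rep (u n)" for n
      using s dual_rep_dual_vec unfolding u_def cdual_eq_range_dual_rep by simp
    have dist_u: "ip_norm dual_ip (s m - dual_rep x) = norm (u m - x)" for m x
      by (simp add: ip_norm_dual_ip s_u dual_rep_diff)
    have "Cauchy u"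
      using C by (intro CauchyI) (metis dist_u s_u)
    then obtain x where "u \<longlonglongrightarrow> x" using Cauchy_convergent_iff convergent_def by blast
    then have "(\<lambda>n. norm (u n - x)) \<longlonglongrightarrow> 0"
      using LIM_zero tendsto_norm_zero by blast
    then show ?thesis using dist_u by (intro bexI[of _ "dual_rep x"]) auto
  qed
  ultimately show ?thesis
    unfolding hilbert_ip_on_def cdual_eq_range_dual_rep
    by (auto simp: dual_ip_def dual_rep_add dual_rep_scaleC cinner_add_left cinner_scaleC_left
        cinner_ge_zero dual_rep_zero[symmetric] inj_eq[OF inj_dual_rep] cinner_eq_zero_iff
        intro: cinner_commute)
qed

lemma ip_norm_dual_ip_eq_Sup:
  "\<Phi> \<in> cdual D t \<Longrightarrow> ip_norm dual_ip \<Phi> = Sup {cmod (\<Phi> f) |f. f \<in> D \<and> ip_norm T_ip f \<le> 1}"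
  using norm_eq_Sup_dual_rep[of "dual_vec \<Phi>"] by (simp add: ip_norm_dual_ip ip_norm_T_ip dual_rep_dual_vec)

lemma strong_dual_eq_dual_ip_topology:
  "seminorm_topology (cdual D t) {ip_norm dual_ip} = strong_dual D t"
  unfolding strong_dual_def ip_norm_dual_ip
proof (rule seminorm_topology_single_eqI)
  show "(\<lambda>\<Phi>. Sup (insert 0 ((\<lambda>f. cmod (\<Phi> f)) ` {f \<in> D. norm (T f) \<le> 1})))
      \<in> {\<lambda>\<Phi>. Sup (insert 0 ((\<lambda>f. cmod (\<Phi> f)) ` B)) |B. B \<subseteq> D \<and> tvs_bounded t B}"
    using tvs_bounded_T_unit_ball by (intro CollectI exI[of _ "{f \<in> D. norm (T f) \<le> 1}"]) auto
  show "norm (dual_vec (\<Psi> - \<Phi>)) \<le> Sup (insert 0 ((\<lambda>f. cmod ((\<Psi> - \<Phi>) f)) ` {f \<in> D. norm (T f) \<le> 1}))"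
    if "\<Phi> \<in> cdual D t" "\<Psi> \<in> cdual D t" for \<Phi> \<Psi>
    using Sup_dual_rep_T_unit_ball[of "dual_vec (\<Psi> - \<Phi>)"]
    by (simp only: dual_rep_dual_vec[OF cdual_diff[OF that]] order_refl)
  show "\<exists>M\<ge>0. \<forall>\<Phi>\<in>cdual D t. \<forall>\<Psi>\<in>cdual D t. p (\<Psi> - \<Phi>) \<le> M * norm (dual_vec (\<Psi> - \<Phi>))"
    if p: "p \<in> {\<lambda>\<Phi>. Sup (insert 0 ((\<lambda>f. cmod (\<Phi> f)) ` B)) |B. B \<subseteq> D \<and> tvs_bounded t B}" for p
  proof -
    obtain B where B: "tvs_bounded t B" "p = (\<lambda>\<Phi>. Sup (insert 0 ((\<lambda>f. cmod (\<Phi> f)) ` B)))"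
      using p by blast
    obtain M where M: "M \<ge> 0" "\<And>r. p (dual_rep r) \<le> M * norm r"
      using Sup_dual_rep_tvs_bounded_le[OF B(1)] B(2) by auto
    have "p (\<Psi> - \<Phi>) \<le> M * norm (dual_vec (\<Psi> - \<Phi>))" if "\<Phi> \<in> cdual D t" "\<Psi> \<in> cdual D t" for \<Phi> \<Psi>
      using M(2)[of "dual_vec (\<Psi> - \<Phi>)"] by (simp only: dual_rep_dual_vec[OF cdual_diff[OF that]])
    then show ?thesis using M(1) by blast
  qed
qed simp

lemma onb_on_T_ip: "onb_on D T_ip \<xi>"
  unfolding onb_on_def ip_norm_T_ip
proof (intro conjI allI ballI impI)
  show "range \<xi> \<subseteq> D" using \<xi>_in_D by blast
  show "T_ip (\<xi> n) (\<xi> m) = (if n = m then 1 else 0)" for n m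
    by (simp add: T_ip_def orthonormal_seqD[OF orthonormal_T_\<xi>])
  fix x \<epsilon> assume x: "x \<in> D" and "(\<epsilon>::real) > 0"
  then obtain N c where "norm (T x - (\<Sum>n<N. c n *\<^sub>C T (\<xi> n))) < \<epsilon>"
    using T_\<xi>_span_dense by blast
  then have "norm (T (x - (\<Sum>n<N. c n *\<^sub>C \<xi> n))) < \<epsilon>"
    using x by (simp add: T_diff T_sum T_scaleC D_sum D_scaleC \<xi>_in_D)
  then show "\<exists>N c. norm (T (x - (\<Sum>n<N. c n *\<^sub>C \<xi> n))) < \<epsilon>" by blast
qed

lemma dual_seq_eq_dual_rep:
  assumes \<zeta>: "\<zeta> \<in> cdual D t" and coeff: "\<And>f. f \<in> D \<Longrightarrow> coeff f n = cnj (\<zeta> f)"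
  shows "\<zeta> = dual_rep (T (\<xi> n))"
proof
  fix f show "\<zeta> f = dual_rep (T (\<xi> n)) f"
  proof (cases "f \<in> D")
    case False then show ?thesis using \<zeta> unfolding cdual_def dual_rep_def by auto
  next
    case f: True
    \<comment> \<open>pair the expansion of \<open>T f\<close> with \<open>T \<xi>\<^sub>n\<close>: only the \<open>n\<close>-th coefficient survives\<close>
    have "(\<lambda>N. cinner (T (\<xi> n)) (\<Sum>k<N. coeff f k *\<^sub>C T (\<xi> k))) \<longlonglongrightarrow> cinner (T (\<xi> n)) (T f)"
      by (rule tendsto_cinner_right[OF T_schauder_expansion[OF f]])
    moreover have "\<forall>N\<ge>Suc n. cinner (T (\<xi> n)) (\<Sum>k<N. coeff f k *\<^sub>C T (\<xi> k)) = \<zeta> f"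
      by (simp add: cinner_orthonormal_sum_right[OF orthonormal_T_\<xi>] coeff[OF f])
    then have "(\<lambda>N. cinner (T (\<xi> n)) (\<Sum>k<N. coeff f k *\<^sub>C T (\<xi> k))) \<longlonglongrightarrow> \<zeta> f"
      by (intro tendsto_eventually) (auto simp: eventually_sequentially)
    ultimately have "\<zeta> f = cinner (T (\<xi> n)) (T f)" using LIMSEQ_unique by blast
    then show ?thesis using f by (simp add: dual_rep_def)
  qed
qed

lemma onb_on_dual_ip:
  assumes \<zeta>: "\<And>n. \<zeta> n \<in> cdual D t" and coeff: "\<And>n f. f \<in> D \<Longrightarrow> coeff f n = cnj (\<zeta> n f)"
  shows "onb_on (cdual D t) dual_ip \<zeta>"
proof -
  have \<zeta>_eq: "\<zeta> n = dual_rep (T (\<xi> n))" for n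
    by (rule dual_seq_eq_dual_rep[OF \<zeta> coeff])
  show ?thesis
    unfolding onb_on_def ip_norm_dual_ip
  proof (intro conjI allI ballI impI)
    show "range \<zeta> \<subseteq> cdual D t" using \<zeta> by blast
    show "dual_ip (\<zeta> n) (\<zeta> m) = (if n = m then 1 else 0)" for n m
      by (simp add: dual_ip_def \<zeta>_eq orthonormal_seqD[OF orthonormal_T_\<xi>])
    fix \<Phi> \<epsilon> assume \<Phi>: "\<Phi> \<in> cdual D t" and "(\<epsilon>::real) > 0"
    then obtain N c where Nc: "norm (dual_vec \<Phi> - (\<Sum>n<N. c n *\<^sub>C T (\<xi> n))) < \<epsilon>"
      using T_\<xi>_span_dense by blast
    have "\<Phi> - (\<Sum>n<N. c n *\<^sub>C \<zeta> n) = dual_rep (dual_vec \<Phi>) - dual_rep (\<Sum>n<N. c n *\<^sub>C T (\<xi> n))"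
      by (simp only: dual_rep_dual_vec[OF \<Phi>] \<zeta>_eq dual_rep_scaleC dual_rep_sum)
    also have "\<dots> = dual_rep (dual_vec \<Phi> - (\<Sum>n<N. c n *\<^sub>C T (\<xi> n)))"
      by (rule dual_rep_diff)
    finally have "norm (dual_vec (\<Phi> - (\<Sum>n<N. c n *\<^sub>C \<zeta> n))) < \<epsilon>"
      using Nc by simp
    then show "\<exists>N c. norm (dual_vec (\<Phi> - (\<Sum>n<N. c n *\<^sub>C \<zeta> n))) < \<epsilon>" by blast
  qed
qed

end

theorem proposition3p10:
  fixes D :: "'h::{complex_inner,complete_space} set"
    and t :: "'h topology"
    and \<xi> :: "nat \<Rightarrow> 'h"
    and \<zeta> :: "nat \<Rightarrow> ('h \<Rightarrow> complex)"
  assumes rhs: "rigged_hilbert_space D t"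
    and complete: "complete_tvs t"
    and reflexive: "reflexive_lcs D t"
    and riesz: "strict_riesz_like_basis D t \<xi>"
    and dual_seq: "\<And>n. \<zeta> n \<in> cdual D t"
    and dual_coeff: "\<And>n f. f \<in> D \<Longrightarrow> schauder_coeffs t \<xi> f n = cnj (\<zeta> n f)"
  shows "\<exists>ip1 ipm.
           hilbert_ip_on D ip1 \<and> seminorm_topology D {ip_norm ip1} = t \<and>
           hilbert_ip_on (cdual D t) ipm \<and>
           (\<forall>\<Phi>\<in>cdual D t. ip_norm ipm \<Phi> = Sup {cmod (\<Phi> f) | f. f \<in> D \<and> ip_norm ip1 f \<le> 1}) \<and>
           seminorm_topology (cdual D t) {ip_norm ipm} = strong_dual D t \<and>
           onb_on D ip1 \<xi> \<and> onb_on (cdual D t) ipm \<zeta>"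
proof -
  obtain T :: "'h \<Rightarrow> 'h" where T: "clinear_on D T" "inj_on T D" "continuous_map t euclidean T"
    "onb_on UNIV cinner (T \<circ> \<xi>)" "T ` D = UNIV" "continuous_map euclidean t (inv_into D T)"
    using riesz unfolding strict_riesz_like_basis_def by blast
  obtain P where "t = seminorm_topology D P"
    using rhs unfolding rigged_hilbert_space_def lc_topology_def by blast
  then have "topspace t = D" by (simp add: topspace_seminorm_topology)
  moreover have "csubspace D" "schauder_basis D t \<xi>"
    using rhs riesz unfolding rigged_hilbert_space_def strict_riesz_like_basis_def by blast+
  ultimately interpret hilbert_iso_basis D t T \<xi>
    using T by unfold_locales auto
  show ?thesis
  proof (intro exI conjI)
    show "hilbert_ip_on D T_ip" by (rule hilbert_ip_on_T_ip)
    show "seminorm_topology D {ip_norm T_ip} = t"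
      by (simp add: ip_norm_T_ip topology_eq_T_norm[symmetric])
    show "hilbert_ip_on (cdual D t) dual_ip" by (rule hilbert_ip_on_dual_ip)
    show "\<forall>\<Phi>\<in>cdual D t. ip_norm dual_ip \<Phi> = Sup {cmod (\<Phi> f) |f. f \<in> D \<and> ip_norm T_ip f \<le> 1}"
      using ip_norm_dual_ip_eq_Sup by blast
    show "seminorm_topology (cdual D t) {ip_norm dual_ip} = strong_dual D t"
      by (rule strong_dual_eq_dual_ip_topology)
    show "onb_on D T_ip \<xi>" by (rule onb_on_T_ip)
    show "onb_on (cdual D t) dual_ip \<zeta>" by (rule onb_on_dual_ip[OF dual_seq dual_coeff])
  qed
qed

end
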